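(* Let $q:\mathbb{R}^2\to\mathbb{C}^N$ be smooth, let $\Phi_1$ be a solution of the Lax pair at $\lambda=\lambda_1$, and let $\Phi$ be a solution at $\lambda$, with $\lambda\neq\overline{\lambda_1}$. Define $\Omega(\Phi_1,\Phi)=\dfrac{\Phi_1^{\dagger}\Lambda\Phi}{\mathrm{i}(\lambda-\overline{\lambda_1})}$ and $\Omega(\Phi_1,\Phi_1)$ as follows: if $\lambda_1\notin\mathbb{R}$, $\Omega(\Phi_1,\Phi_1)=\dfrac{\Phi_1^{\dagger}\Lambda\Phi_1}{\mathrm{i}(\lambda_1-\overline{\lambda_1})}$; if $\lambda_1\in\mathbb{R}$, assume $\Phi_1^{\dagger}\Lambda\Phi_1\equiv0$ and let $\Omega(\Phi_1,\Phi_1)$ be any real-valued smooth function with $d\,\Omega(\Phi_1,\Phi_1)=\omega(\Phi_1,\Phi_1)$. Assume $\Omega(\Phi_1,\Phi_1)$ vanishes nowhere. Set $$\Phi[1]=\Phi-\frac{\Phi_1\,\Omega(\Phi_1,\Phi)}{\Omega(\Phi_1,\Phi_1)},\qquad Q[1]=Q-\mathrm{i}\Big[\sigma_3,\frac{\Phi_1\Phi_1^{\dagger}\Lambda}{\Omega(\Phi_1,\Phi_1)}\Big].$$ Then $Q[1]$ has the form $\begin{pmatrix}0&-\mathbf q[1]^{\dagger}S\\ \mathbf q[1]&0\end{pmatrix}$ for some $\mathbf q[1]:\mathbb{R}^2\to\mathbb{C}^N$, and $\Phi[1]_x=(\mathrm{i}\lambda\sigma_3+\mathrm{i}Q[1])\Phi[1]$,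 $\Phi[1]_t=\big(\mathrm{i}\lambda^2\sigma_3+\mathrm{i}\lambda Q[1]-\tfrac12(\mathrm{i}\sigma_3Q[1]^2-\sigma_3Q[1]_x)\big)\Phi[1]$.
   Context: Fix integers $N\ge1$ and $0\le k\le N$, and let $S=\mathrm{diag}(s_1,\dots,s_N)$ with $s_l=1$ for $l\le k$ and $s_l=-1$ for $l>k$. The $N$-component NLS equation is $\mathrm{i}\mathbf q_t+\tfrac12\mathbf q_{xx}-\mathbf q\,(\mathbf q^{\dagger}S\mathbf q)=0$ for $\mathbf q=(q_1,\dots,q_N)^T:\mathbb{R}^2\to\mathbb{C}^N$ (here ${}^\dagger$ is conjugate transpose). Its Lax pair is $\Phi_x=(\mathrm{i}\lambda\sigma_3+\mathrm{i}Q)\Phi$, $\Phi_t=\big(\mathrm{i}\lambda^2\sigma_3+\mathrm{i}\lambda Q-\tfrac12(\mathrm{i}\sigma_3Q^2-\sigma_3Q_x)\big)\Phi$, for $\Phi:\mathbb{R}^2\to\mathbb{C}^{N+1}$ and spectral parameter $\lambda\in\mathbb{C}$, where $Q=\begin{pmatrix}0&-\mathbf q^{\dagger}S\\ \mathbf q&0_{N\times N}\end{pmatrix}$ and $\sigma_3=\mathrm{diag}(1,-I_N)$. A "solution at $\lambda$" is a smooth $\Phi$ satisfying both equations with that value of $\lambda$. Let $\Lambda=\mathrm{diag}(1,-s_1,\dots,-s_N)$ (i.e. $1$, then $-1$ repeated $k$ times, then $1$ repeated $N-k$ times). For a solution $\Phi_1$ at $\lambda_1$ and a solution $\Phi$ at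 $\lambda$, $\omega(\Phi_1,\Phi)$ denotes the $1$-form $\Phi_1^{\dagger}\Lambda\sigma_3\Phi\,dx+[(\lambda+\overline{\lambda_1})\Phi_1^{\dagger}\Lambda\sigma_3\Phi+\Phi_1^{\dagger}\Lambda Q\Phi]\,dt$. $[A,B]=AB-BA$. *)

theory Defs
  imports "HOL-Analysis.Analysis"
begin

text \<open>Vectors in C^(N+1) are
functions nat => complex, only indices 0..N are meaningful; index 0 is the first
component, indices 1..N correspond to q_1..q_N. Vectors q in C^N are functions
nat => complex with meaningful indices 1..N. (N+1)x(N+1) matrices are functions
nat => nat => complex with meaningful indices 0..N.\<close>

type_synonym cvec = "nat \<Rightarrow> complex"
type_synonym cmat = "nat \<Rightarrow> nat \<Rightarrow> complex"

definition has_px :: "(real \<times> real \<Rightarrow> complex) \<Rightarrow> (real \<times> real \<Rightarrow> complex) \<Rightarrow> bool" where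
  "has_px f g \<longleftrightarrow> (\<forall>x t. ((\<lambda>s. f (s, t)) has_vector_derivative g (x, t)) (at x))"

definition has_pt :: "(real \<times> real \<Rightarrow> complex) \<Rightarrow> (real \<times> real \<Rightarrow> complex) \<Rightarrow> bool" where
  "has_pt f g \<longleftrightarrow> (\<forall>x t. ((\<lambda>s. f (x, s)) has_vector_derivative g (x, t)) (at t))"

text \<open>C-infinity: f is continuous, and both partial derivatives exist everywhere
and are again C-infinity.\<close>
coinductive smooth2 :: "(real \<times> real \<Rightarrow> complex) \<Rightarrow> bool" where
  "continuous_on UNIV f \<Longrightarrow> has_px f g \<Longrightarrow> has_pt f h \<Longrightarrow> smooth2 g \<Longrightarrow> smooth2 h
   \<Longrightarrow> smooth2 f"

definition sgnS :: "nat \<Rightarrow> nat \<Rightarrow> complex" where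
  "sgnS k l = (if l \<le> k then 1 else -1)"

definition mmul :: "nat \<Rightarrow> cmat \<Rightarrow> cmat \<Rightarrow> cmat" where
  "mmul N A B = (\<lambda>i j. \<Sum>l\<le>N. A i l * B l j)"

definition mvec :: "nat \<Rightarrow> cmat \<Rightarrow> cvec \<Rightarrow> cvec" where
  "mvec N A v = (\<lambda>i. \<Sum>j\<le>N. A i j * v j)"

definition hform :: "nat \<Rightarrow> cvec \<Rightarrow> cmat \<Rightarrow> cvec \<Rightarrow> complex" where
  "hform N u M v = (\<Sum>i\<le>N. \<Sum>j\<le>N. cnj (u i) * M i j * v j)"

definition outer :: "cvec \<Rightarrow> cvec \<Rightarrow> cmat" where
  "outer u v = (\<lambda>i j. u i * cnj (v j))"

definition msub :: "cmat \<Rightarrow> cmat \<Rightarrow> cmat" where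
  "msub A B = (\<lambda>i j. A i j - B i j)"

definition mscale :: "complex \<Rightarrow> cmat \<Rightarrow> cmat" where
  "mscale c A = (\<lambda>i j. c * A i j)"

definition comm :: "nat \<Rightarrow> cmat \<Rightarrow> cmat \<Rightarrow> cmat" where
  "comm N A B = msub (mmul N A B) (mmul N B A)"

definition sigma3 :: cmat where
  "sigma3 = (\<lambda>i j. if i = j then (if i = 0 then 1 else -1) else 0)"

definition Lam :: "nat \<Rightarrow> cmat" where
  "Lam k = (\<lambda>i j. if i = j then (if i = 0 then 1 else - sgnS k i) else 0)"

definition Qmat :: "nat \<Rightarrow> nat \<Rightarrow> cvec \<Rightarrow> cmat" where
  "Qmat N k q = (\<lambda>i j.
      if i = 0 \<and> 1 \<le> j \<and> j \<le> N then - cnj (q j) * sgnS k j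
      else if 1 \<le> i \<and> i \<le> N \<and> j = 0 then q i
      else 0)"

definition LaxU :: "complex \<Rightarrow> cmat \<Rightarrow> cmat" where
  "LaxU lam Q = (\<lambda>i j. \<i> * lam * sigma3 i j + \<i> * Q i j)"

definition LaxV :: "nat \<Rightarrow> complex \<Rightarrow> cmat \<Rightarrow> cmat \<Rightarrow> cmat" where
  "LaxV N lam Q Qx = (\<lambda>i j. \<i> * lam\<^sup>2 * sigma3 i j + \<i> * lam * Q i j
      - (1/2) * (\<i> * mmul N sigma3 (mmul N Q Q) i j - mmul N sigma3 Qx i j))"

definition lax_eqs :: "nat \<Rightarrow> (real \<times> real \<Rightarrow> cmat) \<Rightarrow> (real \<times> real \<Rightarrow> cmat) \<Rightarrow> complex
    \<Rightarrow> (real \<times> real \<Rightarrow> cvec) \<Rightarrow> bool" where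
  "lax_eqs N Q Qx lam Phi \<longleftrightarrow>
     (\<forall>i\<le>N. has_px (\<lambda>p. Phi p i) (\<lambda>p. mvec N (LaxU lam (Q p)) (Phi p) i)
           \<and> has_pt (\<lambda>p. Phi p i) (\<lambda>p. mvec N (LaxV N lam (Q p) (Qx p)) (Phi p) i))"

definition lax_solution :: "nat \<Rightarrow> nat \<Rightarrow> (real \<times> real \<Rightarrow> cvec) \<Rightarrow> (real \<times> real \<Rightarrow> cvec)
    \<Rightarrow> complex \<Rightarrow> (real \<times> real \<Rightarrow> cvec) \<Rightarrow> bool" where
  "lax_solution N k q qx lam Phi \<longleftrightarrow>
     (\<forall>i\<le>N. smooth2 (\<lambda>p. Phi p i)) \<and>
     lax_eqs N (\<lambda>p. Qmat N k (q p)) (\<lambda>p. Qmat N k (qx p)) lam Phi"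

end

theory Submission
  imports Defs
begin

text \<open>The Lax equations give \<open>d(\<Phi>\<^sub>1\<^sup>\<dagger>\<Lambda>\<Phi>) = i(\<lambda> - \<lambda>\<^sub>1\<^sup>*) \<omega>(\<Phi>\<^sub>1,\<Phi>)\<close>, because
\<open>Q\<^sup>\<dagger>\<Lambda> = -\<Lambda>Q\<close>; hence \<open>\<Omega>(\<Phi>\<^sub>1,\<Phi>)\<close> is a potential of \<open>\<omega>(\<Phi>\<^sub>1,\<Phi>)\<close>. For non-real
\<open>\<lambda>\<^sub>1\<close> the same applies to \<open>\<Omega>(\<Phi>\<^sub>1,\<Phi>\<^sub>1)\<close>, which is real because \<open>\<Lambda>\<close> is Hermitian; for
real \<open>\<lambda>\<^sub>1\<close> both facts are hypotheses. Since \<open>\<Omega>(\<Phi>\<^sub>1,\<Phi>\<^sub>1)\<close> is real, the commutator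
correction keeps the shape of \<open>Q\<close>, with \<open>q[1] = q + 2i \<Phi>\<^sub>1\<^sub>,\<^sub>0\<^sup>* \<Phi>\<^sub>1 / \<Omega>(\<Phi>\<^sub>1,\<Phi>\<^sub>1)\<close>.
Differentiating \<open>\<Phi>[1]\<close> by the product and quotient rules and substituting \<open>d\<Omega> = \<omega>\<close> leaves a
polynomial identity in the components, once the forms \<open>\<Phi>\<^sub>1\<^sup>\<dagger>S\<Phi>\<close> and \<open>\<Phi>\<^sub>1\<^sup>\<dagger>S\<Phi>\<^sub>1\<close> are
expressed through \<open>\<Omega>(\<Phi>\<^sub>1,\<Phi>)\<close> and \<open>\<Omega>(\<Phi>\<^sub>1,\<Phi>\<^sub>1)\<close>.\<close>

definition sform :: "nat \<Rightarrow> nat \<Rightarrow> cvec \<Rightarrow> cvec \<Rightarrow> complex" where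
  "sform N k u v = (\<Sum>j=1..N. sgnS k j * cnj (u j) * v j)"

lemma sform_cong:
  "(\<And>j. 1 \<le> j \<Longrightarrow> j \<le> N \<Longrightarrow> u j = u' j) \<Longrightarrow> (\<And>j. 1 \<le> j \<Longrightarrow> j \<le> N \<Longrightarrow> v j = v' j)
   \<Longrightarrow> sform N k u v = sform N k u' v'"
  unfolding sform_def by (intro sum.cong) auto

lemma cnj_sform: "cnj (sform N k u v) = sform N k v u"
  unfolding sform_def sgnS_def by (auto simp: mult_ac intro!: sum.cong)

lemma sform_add_left: "sform N k (\<lambda>j. u j + v j) w = sform N k u w + sform N k v w"
  and sform_diff_left: "sform N k (\<lambda>j. u j - v j) w = sform N k u w - sform N k v w"
  and sform_add_right: "sform N k w (\<lambda>j. u j + v j) = sform N k w u + sform N k w v"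
  and sform_diff_right: "sform N k w (\<lambda>j. u j - v j) = sform N k w u - sform N k w v"
  unfolding sform_def by (simp_all add: algebra_simps sum.distrib sum_subtractf)

lemma sform_scale_left: "sform N k (\<lambda>j. c * u j) w = cnj c * sform N k u w"
  and sform_scale_right: "sform N k w (\<lambda>j. c * u j) = c * sform N k w u"
  and sform_scale_div_right: "sform N k w (\<lambda>j. u j * c / d) = c / d * sform N k w u"
  unfolding sform_def
  by (simp_all add: algebra_simps sum_distrib_left sum_divide_distrib)

lemmas sform_linear = sform_add_left sform_diff_left sform_add_right sform_diff_right
  sform_scale_left sform_scale_right sform_scale_div_right

lemma sum_atMost_split0: "(\<Sum>i\<le>(N::nat). f i) = f 0 + (\<Sum>i=1..N. f i)"
  by (simp add: atMost_atLeast0 sum.atLeast_Suc_atMost)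

lemma mvec_diag: "i \<le> N \<Longrightarrow> mvec N (\<lambda>i j. if i = j then d i else 0) v i = d i * v i"
  unfolding mvec_def by (simp add: if_distrib[of "\<lambda>x. x * _"] cong: if_cong)

lemma mmul_diag_left: "i \<le> N \<Longrightarrow> mmul N (\<lambda>i j. if i = j then d i else 0) B i j = d i * B i j"
  unfolding mmul_def by (simp add: if_distrib[of "\<lambda>x. x * _"] cong: if_cong)

lemma mmul_diag_right: "j \<le> N \<Longrightarrow> mmul N A (\<lambda>i j. if i = j then d i else 0) i j = A i j * d j"
  unfolding mmul_def by (simp add: if_distrib[of "\<lambda>x. _ * x"] cong: if_cong)

lemma mvec_sigma3: "i \<le> N \<Longrightarrow> mvec N sigma3 v i = (if i = 0 then v i else - v i)"
  unfolding sigma3_def by (subst mvec_diag) auto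

lemma mvec_Lam: "i \<le> N \<Longrightarrow> mvec N (Lam k) v i = (if i = 0 then v i else - sgnS k i * v i)"
  unfolding Lam_def by (subst mvec_diag) auto

lemma mvec_mmul: "mvec N (mmul N A B) v = mvec N A (mvec N B v)"
  unfolding mvec_def mmul_def
  by (auto simp: sum_distrib_right sum_distrib_left mult.assoc intro: sum.swap)

lemma mvec_Qmat_0: "mvec N (Qmat N k q) v 0 = - sform N k q v"
  unfolding mvec_def sum_atMost_split0 sform_def
  by (simp add: Qmat_def sum_negf mult_ac)

lemma mvec_Qmat: "1 \<le> i \<Longrightarrow> i \<le> N \<Longrightarrow> mvec N (Qmat N k q) v i = q i * v 0"
  unfolding mvec_def sum_atMost_split0 by (simp add: Qmat_def)

lemma mvec_LaxU: "mvec N (LaxU lam Q) v i = \<i> * lam * mvec N sigma3 v i + \<i> * mvec N Q v i"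
  unfolding mvec_def LaxU_def by (simp add: algebra_simps sum.distrib sum_distrib_left)

lemma mvec_LaxV:
  "mvec N (LaxV N lam Q Qx) v i = \<i> * lam\<^sup>2 * mvec N sigma3 v i + \<i> * lam * mvec N Q v i
     - 1/2 * (\<i> * mvec N sigma3 (mvec N Q (mvec N Q v)) i - mvec N sigma3 (mvec N Qx v) i)"
  unfolding LaxV_def mvec_mmul[symmetric] unfolding mvec_def
  by (simp add: algebra_simps sum.distrib sum_distrib_left sum_subtractf)

lemma mvec_LaxU_Qmat_0:
  "mvec N (LaxU lam (Qmat N k q)) v 0 = \<i> * lam * v 0 - \<i> * sform N k q v"
  by (simp add: mvec_LaxU mvec_sigma3 mvec_Qmat_0)

lemma mvec_LaxU_Qmat:
  "1 \<le> j \<Longrightarrow> j \<le> N \<Longrightarrow> mvec N (LaxU lam (Qmat N k q)) v j = (- \<i> * lam) * v j + (\<i> * v 0) * q j"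
  by (simp add: mvec_LaxU mvec_sigma3 mvec_Qmat)

lemma sform_mvec_Qmat: "sform N k u (mvec N (Qmat N k q) v) = v 0 * sform N k u q"
proof -
  have "sform N k u (mvec N (Qmat N k q) v) = sform N k u (\<lambda>j. v 0 * q j)"
    by (rule sform_cong) (auto simp: mvec_Qmat)
  then show ?thesis by (simp add: sform_linear)
qed

lemma mvec_LaxV_Qmat_0:
  "mvec N (LaxV N lam (Qmat N k q) (Qmat N k qx)) v 0 =
     \<i> * lam\<^sup>2 * v 0 - \<i> * lam * sform N k q v + (1/2 * \<i>) * sform N k q q * v 0 - 1/2 * sform N k qx v"
  by (simp add: mvec_LaxV mvec_sigma3 mvec_Qmat_0 sform_mvec_Qmat algebra_simps)

lemma mvec_LaxV_Qmat:
  "1 \<le> j \<Longrightarrow> j \<le> N \<Longrightarrow> mvec N (LaxV N lam (Qmat N k q) (Qmat N k qx)) v j =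
     (- \<i> * lam\<^sup>2) * v j + (\<i> * lam * v 0 - (1/2 * \<i>) * sform N k q v) * q j + (- 1/2 * v 0) * qx j"
  by (simp add: mvec_LaxV mvec_sigma3 mvec_Qmat_0 mvec_Qmat algebra_simps)

lemma sform_LaxU_left:
  "sform N k (mvec N (LaxU lam (Qmat N k q)) u) v
     = cnj (- \<i> * lam) * sform N k u v + cnj (\<i> * u 0) * sform N k q v"
proof -
  have "sform N k (mvec N (LaxU lam (Qmat N k q)) u) v
      = sform N k (\<lambda>j. (- \<i> * lam) * u j + (\<i> * u 0) * q j) v"
    by (rule sform_cong) (auto simp: mvec_LaxU_Qmat)
  then show ?thesis by (simp only: sform_linear)
qed

lemma sform_LaxU_right:
  "sform N k u (mvec N (LaxU lam (Qmat N k q)) v) = (- \<i> * lam) * sform N k u v + (\<i> * v 0) * sform N k u q"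
proof -
  have "sform N k u (mvec N (LaxU lam (Qmat N k q)) v)
      = sform N k u (\<lambda>j. (- \<i> * lam) * v j + (\<i> * v 0) * q j)"
    by (rule sform_cong) (auto simp: mvec_LaxU_Qmat)
  then show ?thesis by (simp only: sform_linear)
qed

lemma sform_LaxV_left:
  "sform N k (mvec N (LaxV N lam (Qmat N k q) (Qmat N k qx)) u) v =
     cnj (- \<i> * lam\<^sup>2) * sform N k u v + cnj (\<i> * lam * u 0 - (1/2 * \<i>) * sform N k q u) * sform N k q v
     + cnj (- 1/2 * u 0) * sform N k qx v"
proof -
  have "sform N k (mvec N (LaxV N lam (Qmat N k q) (Qmat N k qx)) u) v =
      sform N k (\<lambda>j. (- \<i> * lam\<^sup>2) * u j + (\<i> * lam * u 0 - (1/2 * \<i>) * sform N k q u) * q j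
        + (- 1/2 * u 0) * qx j) v"
    by (rule sform_cong) (auto simp: mvec_LaxV_Qmat)
  then show ?thesis by (simp only: sform_linear)
qed

lemma sform_LaxV_right:
  "sform N k u (mvec N (LaxV N lam (Qmat N k q) (Qmat N k qx)) v) =
     (- \<i> * lam\<^sup>2) * sform N k u v + (\<i> * lam * v 0 - (1/2 * \<i>) * sform N k q v) * sform N k u q
     + (- 1/2 * v 0) * sform N k u qx"
proof -
  have "sform N k u (mvec N (LaxV N lam (Qmat N k q) (Qmat N k qx)) v) =
      sform N k u (\<lambda>j. (- \<i> * lam\<^sup>2) * v j + (\<i> * lam * v 0 - (1/2 * \<i>) * sform N k q v) * q j
        + (- 1/2 * v 0) * qx j)"
    by (rule sform_cong) (auto simp: mvec_LaxV_Qmat)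
  then show ?thesis by (simp only: sform_linear)
qed

lemma hform_eq_sum_mvec: "hform N u M v = (\<Sum>i\<le>N. cnj (u i) * mvec N M v i)"
  unfolding hform_def mvec_def by (simp add: sum_distrib_left mult.assoc)

lemma hform_Lam: "hform N u (Lam k) v = cnj (u 0) * v 0 - sform N k u v"
  unfolding hform_eq_sum_mvec sum_atMost_split0 sform_def
  by (simp add: mvec_Lam sum_negf mult_ac)

lemma hform_Lam_sigma3: "hform N u (mmul N (Lam k) sigma3) v = cnj (u 0) * v 0 + sform N k u v"
  unfolding hform_eq_sum_mvec sum_atMost_split0 sform_def mvec_mmul
  by (auto simp: mvec_Lam mvec_sigma3 mult_ac intro!: sum.cong)

lemma hform_Lam_Qmat:
  "hform N u (mmul N (Lam k) (Qmat N k q)) v = - cnj (u 0) * sform N k q v - sform N k u q * v 0"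
  unfolding hform_eq_sum_mvec sum_atMost_split0 sform_def mvec_mmul
  by (simp add: mvec_Lam mvec_Qmat_0 mvec_Qmat sum_negf sum_distrib_left sform_def mult_ac)

lemma cnj_hform_Lam: "cnj (hform N u (Lam k) u) = hform N u (Lam k) u"
  by (simp add: hform_Lam cnj_sform)

lemmas cnj_arith = complex_cnj_add complex_cnj_diff complex_cnj_mult complex_cnj_divide
  complex_cnj_minus complex_cnj_i complex_cnj_cnj complex_cnj_one complex_cnj_zero
  complex_cnj_numeral complex_cnj_power complex_cnj_inverse cnj_sform

lemma hform_Lam_LaxU:
  "hform N (mvec N (LaxU lam1 (Qmat N k q)) u) (Lam k) v + hform N u (Lam k) (mvec N (LaxU lam (Qmat N k q)) v)
     = \<i> * (lam - cnj lam1) * hform N u (mmul N (Lam k) sigma3) v"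
  unfolding hform_Lam hform_Lam_sigma3
  by (simp only: mvec_LaxU_Qmat_0 sform_LaxU_left sform_LaxU_right cnj_arith) (simp add: algebra_simps power2_eq_square)

lemma hform_Lam_LaxV:
  "hform N (mvec N (LaxV N lam1 (Qmat N k q) (Qmat N k qx)) u) (Lam k) v
     + hform N u (Lam k) (mvec N (LaxV N lam (Qmat N k q) (Qmat N k qx)) v)
   = \<i> * (lam - cnj lam1) * ((lam + cnj lam1) * hform N u (mmul N (Lam k) sigma3) v
       + hform N u (mmul N (Lam k) (Qmat N k q)) v)"
  unfolding hform_Lam hform_Lam_sigma3 hform_Lam_Qmat
  by (simp only: mvec_LaxV_Qmat_0 sform_LaxV_left sform_LaxV_right cnj_arith) (simp add: algebra_simps power2_eq_square)

lemma has_px_cong: "has_px f g \<Longrightarrow> (\<And>p. g p = g' p) \<Longrightarrow> has_px f g'"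
  and has_pt_cong: "has_pt f g \<Longrightarrow> (\<And>p. g p = g' p) \<Longrightarrow> has_pt f g'"
  by (simp_all add: has_px_def has_pt_def)

lemma has_px_add: "has_px f f' \<Longrightarrow> has_px g g' \<Longrightarrow> has_px (\<lambda>p. f p + g p) (\<lambda>p. f' p + g' p)"
  and has_px_diff: "has_px f f' \<Longrightarrow> has_px g g' \<Longrightarrow> has_px (\<lambda>p. f p - g p) (\<lambda>p. f' p - g' p)"
  and has_pt_diff: "has_pt f f' \<Longrightarrow> has_pt g g' \<Longrightarrow> has_pt (\<lambda>p. f p - g p) (\<lambda>p. f' p - g' p)"
  and has_px_mult: "has_px f f' \<Longrightarrow> has_px g g' \<Longrightarrow> has_px (\<lambda>p. f p * g p) (\<lambda>p. f p * g' p + f' p * g p)"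
  and has_pt_mult: "has_pt f f' \<Longrightarrow> has_pt g g' \<Longrightarrow> has_pt (\<lambda>p. f p * g p) (\<lambda>p. f p * g' p + f' p * g p)"
  and has_px_cmult: "has_px f f' \<Longrightarrow> has_px (\<lambda>p. c * f p) (\<lambda>p. c * f' p)"
  and has_px_divide_const: "has_px f f' \<Longrightarrow> has_px (\<lambda>p. f p / c) (\<lambda>p. f' p / c)"
  and has_pt_divide_const: "has_pt f f' \<Longrightarrow> has_pt (\<lambda>p. f p / c) (\<lambda>p. f' p / c)"
  and has_px_const: "has_px (\<lambda>p. c) (\<lambda>p. 0)"
  and has_pt_const: "has_pt (\<lambda>p. c) (\<lambda>p. 0)"
  and has_px_cnj: "has_px f f' \<Longrightarrow> has_px (\<lambda>p. cnj (f p)) (\<lambda>p. cnj (f' p))"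
  and has_pt_cnj: "has_pt f f' \<Longrightarrow> has_pt (\<lambda>p. cnj (f p)) (\<lambda>p. cnj (f' p))"
  unfolding has_px_def has_pt_def by (auto intro!: derivative_eq_intros)

lemma has_px_sum: "(\<And>i. i \<in> I \<Longrightarrow> has_px (f i) (f' i)) \<Longrightarrow>
    has_px (\<lambda>p. \<Sum>i\<in>I. f i p) (\<lambda>p. \<Sum>i\<in>I. f' i p)"
  and has_pt_sum: "(\<And>i. i \<in> I \<Longrightarrow> has_pt (f i) (f' i)) \<Longrightarrow>
    has_pt (\<lambda>p. \<Sum>i\<in>I. f i p) (\<lambda>p. \<Sum>i\<in>I. f' i p)"
  unfolding has_px_def has_pt_def by (auto intro!: derivative_eq_intros)

lemma has_vector_derivative_inverse:
  assumes "(f has_vector_derivative f') (at x)" "f x \<noteq> (0::complex)"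
  shows "((\<lambda>s. inverse (f s)) has_vector_derivative - f' / (f x)\<^sup>2) (at x)"
proof -
  have "((inverse \<circ> f) has_vector_derivative f' * - (inverse (f x) ^ Suc (Suc 0))) (at x)"
    by (rule field_vector_diff_chain_at[OF assms(1) DERIV_inverse[OF assms(2)]])
  then show ?thesis by (simp add: o_def power2_eq_square divide_inverse)
qed

lemma has_px_divide:
  "has_px f f' \<Longrightarrow> has_px g g' \<Longrightarrow> (\<And>p. g p \<noteq> 0) \<Longrightarrow>
     has_px (\<lambda>p. f p / g p) (\<lambda>p. f' p / g p - f p * g' p / (g p)\<^sup>2)"
  unfolding has_px_def divide_inverse[of "f _"]
  by (fastforce intro!: derivative_eq_intros has_vector_derivative_inverse[where f="\<lambda>s. g (s, _)"]
      simp: divide_inverse)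

lemma has_pt_divide:
  "has_pt f f' \<Longrightarrow> has_pt g g' \<Longrightarrow> (\<And>p. g p \<noteq> 0) \<Longrightarrow>
     has_pt (\<lambda>p. f p / g p) (\<lambda>p. f' p / g p - f p * g' p / (g p)\<^sup>2)"
  unfolding has_pt_def divide_inverse[of "f _"]
  by (fastforce intro!: derivative_eq_intros has_vector_derivative_inverse[where f="\<lambda>s. g (_, s)"]
      simp: divide_inverse)

lemma has_px_hform:
  assumes "\<And>i. i \<le> N \<Longrightarrow> has_px (\<lambda>p. u p i) (\<lambda>p. u' p i)"
    and "\<And>i. i \<le> N \<Longrightarrow> has_px (\<lambda>p. v p i) (\<lambda>p. v' p i)"
  shows "has_px (\<lambda>p. hform N (u p) M (v p)) (\<lambda>p. hform N (u' p) M (v p) + hform N (u p) M (v' p))"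
  unfolding hform_def
  by (rule has_px_cong, (rule has_px_sum has_px_mult has_px_cnj has_px_const assms | simp)+)
    (simp add: algebra_simps sum.distrib)

lemma has_pt_hform:
  assumes "\<And>i. i \<le> N \<Longrightarrow> has_pt (\<lambda>p. u p i) (\<lambda>p. u' p i)"
    and "\<And>i. i \<le> N \<Longrightarrow> has_pt (\<lambda>p. v p i) (\<lambda>p. v' p i)"
  shows "has_pt (\<lambda>p. hform N (u p) M (v p)) (\<lambda>p. hform N (u' p) M (v p) + hform N (u p) M (v' p))"
  unfolding hform_def
  by (rule has_pt_cong, (rule has_pt_sum has_pt_mult has_pt_cnj has_pt_const assms | simp)+)
    (simp add: algebra_simps sum.distrib)

lemma lax_eqsD:
  assumes "lax_eqs N Q Qx lam Phi" "i \<le> N"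
  shows "has_px (\<lambda>p. Phi p i) (\<lambda>p. mvec N (LaxU lam (Q p)) (Phi p) i)"
    and "has_pt (\<lambda>p. Phi p i) (\<lambda>p. mvec N (LaxV N lam (Q p) (Qx p)) (Phi p) i)"
  using assms by (simp_all add: lax_eqs_def)

lemma Omega_exact:
  assumes sol1: "lax_eqs N (\<lambda>p. Qmat N k (q p)) (\<lambda>p. Qmat N k (qx p)) lam1 Phi1"
    and sol: "lax_eqs N (\<lambda>p. Qmat N k (q p)) (\<lambda>p. Qmat N k (qx p)) lam Phi"
    and lam_ne: "lam \<noteq> cnj lam1"
  shows "has_px (\<lambda>p. hform N (Phi1 p) (Lam k) (Phi p) / (\<i> * (lam - cnj lam1)))
           (\<lambda>p. hform N (Phi1 p) (mmul N (Lam k) sigma3) (Phi p))"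
    and "has_pt (\<lambda>p. hform N (Phi1 p) (Lam k) (Phi p) / (\<i> * (lam - cnj lam1)))
           (\<lambda>p. (lam + cnj lam1) * hform N (Phi1 p) (mmul N (Lam k) sigma3) (Phi p)
                + hform N (Phi1 p) (mmul N (Lam k) (Qmat N k (q p))) (Phi p))"
proof -
  let ?c = "\<i> * (lam - cnj lam1)"
  have c: "?c \<noteq> 0" using lam_ne by simp
  have "has_px (\<lambda>p. hform N (Phi1 p) (Lam k) (Phi p))
      (\<lambda>p. ?c * hform N (Phi1 p) (mmul N (Lam k) sigma3) (Phi p))"
    by (rule has_px_cong[OF has_px_hform[OF lax_eqsD(1)[OF sol1] lax_eqsD(1)[OF sol]]])
      (simp_all only: hform_Lam_LaxU)
  from has_px_divide_const[OF this, of ?c] c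
  show "has_px (\<lambda>p. hform N (Phi1 p) (Lam k) (Phi p) / ?c)
      (\<lambda>p. hform N (Phi1 p) (mmul N (Lam k) sigma3) (Phi p))"
    by simp
  have "has_pt (\<lambda>p. hform N (Phi1 p) (Lam k) (Phi p))
      (\<lambda>p. ?c * ((lam + cnj lam1) * hform N (Phi1 p) (mmul N (Lam k) sigma3) (Phi p)
                + hform N (Phi1 p) (mmul N (Lam k) (Qmat N k (q p))) (Phi p)))"
    by (rule has_pt_cong[OF has_pt_hform[OF lax_eqsD(2)[OF sol1] lax_eqsD(2)[OF sol]]])
      (simp_all only: hform_Lam_LaxV)
  from has_pt_divide_const[OF this, of ?c] c
  show "has_pt (\<lambda>p. hform N (Phi1 p) (Lam k) (Phi p) / ?c)
      (\<lambda>p. (lam + cnj lam1) * hform N (Phi1 p) (mmul N (Lam k) sigma3) (Phi p)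
                + hform N (Phi1 p) (mmul N (Lam k) (Qmat N k (q p))) (Phi p))"
    by simp
qed

lemma Omega11_real_exact:
  assumes sol1: "lax_eqs N (\<lambda>p. Qmat N k (q p)) (\<lambda>p. Qmat N k (qx p)) lam1 Phi1"
    and Om_nonreal: "lam1 \<notin> \<real> \<Longrightarrow>
          Om11 = (\<lambda>p. hform N (Phi1 p) (Lam k) (Phi1 p) / (\<i> * (lam1 - cnj lam1)))"
    and Om_real: "lam1 \<in> \<real> \<Longrightarrow>
          (\<forall>p. hform N (Phi1 p) (Lam k) (Phi1 p) = 0) \<and>
          smooth2 Om11 \<and> (\<forall>p. Om11 p \<in> \<real>) \<and>
          has_px Om11 (\<lambda>p. hform N (Phi1 p) (mmul N (Lam k) sigma3) (Phi1 p)) \<and>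
          has_pt Om11 (\<lambda>p. (lam1 + cnj lam1) * hform N (Phi1 p) (mmul N (Lam k) sigma3) (Phi1 p)
                           + hform N (Phi1 p) (mmul N (Lam k) (Qmat N k (q p))) (Phi1 p))"
  shows "\<forall>p. cnj (Om11 p) = Om11 p" (is ?real)
    and "\<forall>p. hform N (Phi1 p) (Lam k) (Phi1 p) = \<i> * (lam1 - cnj lam1) * Om11 p" (is ?norm)
    and "has_px Om11 (\<lambda>p. hform N (Phi1 p) (mmul N (Lam k) sigma3) (Phi1 p))" (is ?dx)
    and "has_pt Om11 (\<lambda>p. (lam1 + cnj lam1) * hform N (Phi1 p) (mmul N (Lam k) sigma3) (Phi1 p)
                           + hform N (Phi1 p) (mmul N (Lam k) (Qmat N k (q p))) (Phi1 p))" (is ?dt)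
proof -
  have "?real \<and> ?norm \<and> ?dx \<and> ?dt"
  proof (cases "lam1 \<in> \<real>")
    case True
    then have "cnj lam1 = lam1" by (simp add: Reals_cnj_iff)
    with Om_real[OF True] show ?thesis by (auto simp: Reals_cnj_iff)
  next
    case False
    then have c: "\<i> * (lam1 - cnj lam1) \<noteq> 0" by (simp add: Reals_cnj_iff)
    have lam_ne: "lam1 \<noteq> cnj lam1" using False by (simp add: Reals_cnj_iff)
    have "cnj (\<i> * (lam1 - cnj lam1)) = \<i> * (lam1 - cnj lam1)" by (simp add: algebra_simps)
    then have ?real by (simp add: Om_nonreal[OF False] cnj_hform_Lam)
    moreover have ?norm using c by (simp add: Om_nonreal[OF False])
    ultimately show ?thesis
      using Omega_exact[OF sol1 sol1 lam_ne] Om_nonreal[OF False] by blast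
  qed
  then show ?real ?norm ?dx ?dt by blast+
qed

lemma darboux_potential:
  assumes w: "cnj w = w" and ij: "i \<le> N" "j \<le> N"
  shows "msub (Qmat N k q) (mscale \<i> (comm N sigma3 (mscale (1 / w) (mmul N (outer v v) (Lam k))))) i j
       = Qmat N k (\<lambda>l. q l + 2 * \<i> * cnj (v 0) / w * v l) i j"
proof -
  have P: "mscale (1 / w) (mmul N (outer v v) (Lam k)) i' j' =
      v i' * cnj (v j') * (if j' = 0 then 1 else - sgnS k j') / w" if "j' \<le> N" for i' j'
    using that unfolding mscale_def Lam_def by (simp add: mmul_diag_right outer_def)
  have "comm N sigma3 (mscale (1 / w) (mmul N (outer v v) (Lam k))) i j =
      ((if i = 0 then 1 else -1) - (if j = 0 then 1 else -1)) *
        (v i * cnj (v j) * (if j = 0 then 1 else - sgnS k j) / w)"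
    using ij unfolding comm_def msub_def sigma3_def
    by (simp add: mmul_diag_left mmul_diag_right P algebra_simps)
  with ij w show ?thesis
    by (auto simp: msub_def mscale_def Qmat_def field_simps)
qed

text \<open>The left-hand sides are what the product and quotient rules give for the derivatives of
\<open>v - v\<^sub>1 \<Omega>(v\<^sub>1,v) / \<Omega>(v\<^sub>1,v\<^sub>1)\<close> once \<open>d\<Omega> = \<omega>\<close> is substituted; here \<open>w\<close> and \<open>om\<close> stand for
\<open>\<Omega>(v\<^sub>1,v\<^sub>1)\<close> and \<open>\<Omega>(v\<^sub>1,v)\<close>.\<close>

lemma darboux_LaxU_identity:
  assumes w: "cnj w = w" "w \<noteq> 0"
    and norm1: "hform N v1 (Lam k) v1 = \<i> * (lam1 - cnj lam1) * w"
    and norm: "hform N v1 (Lam k) v = \<i> * (lam - cnj lam1) * om"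
    and i: "i \<le> N"
  shows "mvec N (LaxU lam (Qmat N k q)) v i
       - ((v1 i * hform N v1 (mmul N (Lam k) sigma3) v + mvec N (LaxU lam1 (Qmat N k q)) v1 i * om) / w
          - v1 i * om * hform N v1 (mmul N (Lam k) sigma3) v1 / w\<^sup>2)
     = mvec N (LaxU lam (Qmat N k (\<lambda>l. q l + 2 * \<i> * cnj (v1 0) / w * v1 l))) (\<lambda>l. v l - v1 l * om / w) i"
proof -
  have S11: "sform N k v1 v1 = cnj (v1 0) * v1 0 - \<i> * (lam1 - cnj lam1) * w"
    using norm1 by (simp add: hform_Lam algebra_simps)
  have S1: "sform N k v1 v = cnj (v1 0) * v 0 - \<i> * (lam - cnj lam1) * om"
    using norm by (simp add: hform_Lam algebra_simps)
  have winv: "w * inverse w = 1" "inverse (w\<^sup>2) = inverse w ^ 2"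
    using w by (simp_all add: power_inverse)
  consider "i = 0" | "1 \<le> i" by linarith
  then show ?thesis
  proof cases
    case 1
    show ?thesis
      unfolding 1
      by (simp only: hform_Lam_sigma3 mvec_LaxU_Qmat_0 sform_linear cnj_arith w S11 S1, simp only: divide_inverse)
        (use winv i_squared in algebra)
  next
    case 2
    show ?thesis
      by (simp only: hform_Lam_sigma3 mvec_LaxU_Qmat_0 mvec_LaxU_Qmat[OF 2 i] sform_linear cnj_arith
          w S11 S1, simp only: divide_inverse)
        (use winv i_squared in algebra)
  qed
qed

text \<open>\<open>bx\<close> is the \<open>x\<close>-derivative of \<open>b\<close>, so the second potential below is the
\<open>x\<close>-derivative of the first by the product rule.\<close>

lemma darboux_LaxV_identity:
  fixes q qx :: cvec
  assumes w: "cnj w = w" "w \<noteq> 0"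
    and norm1: "hform N v1 (Lam k) v1 = \<i> * (lam1 - cnj lam1) * w"
    and norm: "hform N v1 (Lam k) v = \<i> * (lam - cnj lam1) * om"
    and i: "i \<le> N"
  defines "b \<equiv> 2 * \<i> * cnj (v1 0) / w"
    and "bx \<equiv> 2 * \<i> * cnj (mvec N (LaxU lam1 (Qmat N k q)) v1 0) / w
              - 2 * \<i> * cnj (v1 0) * hform N v1 (mmul N (Lam k) sigma3) v1 / w\<^sup>2"
  shows "mvec N (LaxV N lam (Qmat N k q) (Qmat N k qx)) v i
       - ((v1 i * ((lam + cnj lam1) * hform N v1 (mmul N (Lam k) sigma3) v
                   + hform N v1 (mmul N (Lam k) (Qmat N k q)) v)
           + mvec N (LaxV N lam1 (Qmat N k q) (Qmat N k qx)) v1 i * om) / w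
          - v1 i * om * ((lam1 + cnj lam1) * hform N v1 (mmul N (Lam k) sigma3) v1
                         + hform N v1 (mmul N (Lam k) (Qmat N k q)) v1) / w\<^sup>2)
     = mvec N (LaxV N lam (Qmat N k (\<lambda>l. q l + b * v1 l))
          (Qmat N k (\<lambda>l. qx l + (b * mvec N (LaxU lam1 (Qmat N k q)) v1 l + bx * v1 l))))
          (\<lambda>l. v l - v1 l * om / w) i"
proof -
  have S11: "sform N k v1 v1 = cnj (v1 0) * v1 0 - \<i> * (lam1 - cnj lam1) * w"
    using norm1 by (simp add: hform_Lam algebra_simps)
  have S1: "sform N k v1 v = cnj (v1 0) * v 0 - \<i> * (lam - cnj lam1) * om"
    using norm by (simp add: hform_Lam algebra_simps)
  have winv: "w * inverse w = 1" "inverse (w\<^sup>2) = inverse w ^ 2"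
    using w by (simp_all add: power_inverse)
  consider "i = 0" | "1 \<le> i" by linarith
  then show ?thesis
  proof cases
    case 1
    show ?thesis
      unfolding 1 b_def bx_def
      by (simp only: hform_Lam_sigma3 hform_Lam_Qmat mvec_LaxV_Qmat_0 mvec_LaxU_Qmat_0 sform_linear
          sform_LaxU_left cnj_arith w S11 S1, simp only: divide_inverse)
        (use winv i_squared in algebra)
  next
    case 2
    show ?thesis
      unfolding b_def bx_def
      by (simp only: hform_Lam_sigma3 hform_Lam_Qmat mvec_LaxV_Qmat_0 mvec_LaxU_Qmat_0
          mvec_LaxV_Qmat[OF 2 i] mvec_LaxU_Qmat[OF 2 i] sform_linear sform_LaxU_left cnj_arith
          w S11 S1, simp only: divide_inverse)
        (use winv i_squared in algebra)
  qed
qed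

lemma darboux_lax_eqs:
  assumes sol1: "lax_eqs N (\<lambda>p. Qmat N k (q p)) (\<lambda>p. Qmat N k (qx p)) lam1 Phi1"
    and sol: "lax_eqs N (\<lambda>p. Qmat N k (q p)) (\<lambda>p. Qmat N k (qx p)) lam Phi"
    and lam_ne: "lam \<noteq> cnj lam1"
    and qx: "\<forall>l. 1 \<le> l \<and> l \<le> N \<longrightarrow> has_px (\<lambda>p. q p l) (\<lambda>p. qx p l)"
    and Om11_real: "\<And>p. cnj (Om11 p) = Om11 p" and Om11_nz: "\<And>p. Om11 p \<noteq> 0"
    and Om11_norm: "\<And>p. hform N (Phi1 p) (Lam k) (Phi1 p) = \<i> * (lam1 - cnj lam1) * Om11 p"
    and dx: "has_px Om11 (\<lambda>p. hform N (Phi1 p) (mmul N (Lam k) sigma3) (Phi1 p))"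
    and dt: "has_pt Om11 (\<lambda>p. (lam1 + cnj lam1) * hform N (Phi1 p) (mmul N (Lam k) sigma3) (Phi1 p)
                           + hform N (Phi1 p) (mmul N (Lam k) (Qmat N k (q p))) (Phi1 p))"
  defines "Om1 \<equiv> \<lambda>p. hform N (Phi1 p) (Lam k) (Phi p) / (\<i> * (lam - cnj lam1))"
    and "q1 \<equiv> \<lambda>p l. q p l + 2 * \<i> * cnj (Phi1 p 0) / Om11 p * Phi1 p l"
  shows "\<exists>q1x. (\<forall>l. 1 \<le> l \<and> l \<le> N \<longrightarrow> has_px (\<lambda>p. q1 p l) (\<lambda>p. q1x p l)) \<and>
           lax_eqs N (\<lambda>p. Qmat N k (q1 p)) (\<lambda>p. Qmat N k (q1x p)) lam
             (\<lambda>p i. Phi p i - Phi1 p i * Om1 p / Om11 p)"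
proof -
  define b where "b = (\<lambda>p. 2 * \<i> * cnj (Phi1 p 0) / Om11 p)"
  define bx where "bx = (\<lambda>p. 2 * \<i> * cnj (mvec N (LaxU lam1 (Qmat N k (q p))) (Phi1 p) 0) / Om11 p
      - 2 * \<i> * cnj (Phi1 p 0) * hform N (Phi1 p) (mmul N (Lam k) sigma3) (Phi1 p) / (Om11 p)\<^sup>2)"
  define q1x where "q1x = (\<lambda>p l. qx p l + (b p * mvec N (LaxU lam1 (Qmat N k (q p))) (Phi1 p) l
      + bx p * Phi1 p l))"
  have Om1_x: "has_px Om1 (\<lambda>p. hform N (Phi1 p) (mmul N (Lam k) sigma3) (Phi p))"
    and Om1_t: "has_pt Om1 (\<lambda>p. (lam + cnj lam1) * hform N (Phi1 p) (mmul N (Lam k) sigma3) (Phi p)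
                + hform N (Phi1 p) (mmul N (Lam k) (Qmat N k (q p))) (Phi p))"
    unfolding Om1_def by (rule Omega_exact[OF sol1 sol lam_ne])+
  have norm: "hform N (Phi1 p) (Lam k) (Phi p) = \<i> * (lam - cnj lam1) * Om1 p" for p
    using lam_ne by (simp add: Om1_def)
  have "has_px b bx"
    unfolding b_def bx_def
    by (rule has_px_divide[OF has_px_cmult[OF has_px_cnj[OF lax_eqsD(1)[OF sol1]]] dx Om11_nz]) simp
  moreover have "q1 = (\<lambda>p l. q p l + b p * Phi1 p l)"
    by (simp add: q1_def b_def)
  ultimately have q1_x: "\<forall>l. 1 \<le> l \<and> l \<le> N \<longrightarrow> has_px (\<lambda>p. q1 p l) (\<lambda>p. q1x p l)"
    unfolding q1x_def by (auto intro!: has_px_add has_px_mult lax_eqsD(1)[OF sol1] qx[rule_format])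
  have "has_px (\<lambda>p. Phi p i - Phi1 p i * Om1 p / Om11 p)
      (\<lambda>p. mvec N (LaxU lam (Qmat N k (q1 p))) (\<lambda>i. Phi p i - Phi1 p i * Om1 p / Om11 p) i)"
    if i: "i \<le> N" for i
    by (rule has_px_cong[OF has_px_diff[OF lax_eqsD(1)[OF sol i]
          has_px_divide[OF has_px_mult[OF lax_eqsD(1)[OF sol1 i] Om1_x] dx]]])
      (simp_all add: Om11_nz q1_def darboux_LaxU_identity[OF Om11_real Om11_nz Om11_norm norm i])
  moreover have "has_pt (\<lambda>p. Phi p i - Phi1 p i * Om1 p / Om11 p)
      (\<lambda>p. mvec N (LaxV N lam (Qmat N k (q1 p)) (Qmat N k (q1x p)))
             (\<lambda>i. Phi p i - Phi1 p i * Om1 p / Om11 p) i)"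
    if i: "i \<le> N" for i
    by (rule has_pt_cong[OF has_pt_diff[OF lax_eqsD(2)[OF sol i]
          has_pt_divide[OF has_pt_mult[OF lax_eqsD(2)[OF sol1 i] Om1_t] dt]]])
      (simp_all add: Om11_nz q1_def q1x_def b_def bx_def
         darboux_LaxV_identity[OF Om11_real Om11_nz Om11_norm norm i])
  ultimately show ?thesis
    using q1_x unfolding lax_eqs_def by blast
qed

theorem mainTheorem2:
  fixes N k :: nat
    and q qx :: "real \<times> real \<Rightarrow> cvec"
    and lam1 lam :: complex
    and Phi1 Phi :: "real \<times> real \<Rightarrow> cvec"
    and Om11 :: "real \<times> real \<Rightarrow> complex"
  assumes "1 \<le> N" and "k \<le> N"
    and q_smooth: "\<forall>l. 1 \<le> l \<and> l \<le> N \<longrightarrow> smooth2 (\<lambda>p. q p l)"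
    and qx: "\<forall>l. 1 \<le> l \<and> l \<le> N \<longrightarrow> has_px (\<lambda>p. q p l) (\<lambda>p. qx p l)"
    and sol1: "lax_solution N k q qx lam1 Phi1"
    and sol: "lax_solution N k q qx lam Phi"
    and lam_ne: "lam \<noteq> cnj lam1"
    and Om_nonreal: "lam1 \<notin> \<real> \<Longrightarrow>
          Om11 = (\<lambda>p. hform N (Phi1 p) (Lam k) (Phi1 p) / (\<i> * (lam1 - cnj lam1)))"
    and Om_real: "lam1 \<in> \<real> \<Longrightarrow>
          (\<forall>p. hform N (Phi1 p) (Lam k) (Phi1 p) = 0) \<and>
          smooth2 Om11 \<and> (\<forall>p. Om11 p \<in> \<real>) \<and>
          has_px Om11 (\<lambda>p. hform N (Phi1 p) (mmul N (Lam k) sigma3) (Phi1 p)) \<and>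
          has_pt Om11 (\<lambda>p. (lam1 + cnj lam1) * hform N (Phi1 p) (mmul N (Lam k) sigma3) (Phi1 p)
                           + hform N (Phi1 p) (mmul N (Lam k) (Qmat N k (q p))) (Phi1 p))"
    and Om_nz: "\<forall>p. Om11 p \<noteq> 0"
  shows "let Om1 = (\<lambda>p. hform N (Phi1 p) (Lam k) (Phi p) / (\<i> * (lam - cnj lam1)));
             PhiNew = (\<lambda>p i. Phi p i - Phi1 p i * Om1 p / Om11 p);
             QNew = (\<lambda>p. msub (Qmat N k (q p))
                       (mscale \<i> (comm N sigma3
                          (mscale (1 / Om11 p) (mmul N (outer (Phi1 p) (Phi1 p)) (Lam k))))))
         in \<exists>q1 q1x :: real \<times> real \<Rightarrow> cvec.
              (\<forall>p i j. i \<le> N \<and> j \<le> N \<longrightarrow> QNew p i j = Qmat N k (q1 p) i j) \<and>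
              (\<forall>l. 1 \<le> l \<and> l \<le> N \<longrightarrow> has_px (\<lambda>p. q1 p l) (\<lambda>p. q1x p l)) \<and>
              lax_eqs N (\<lambda>p. Qmat N k (q1 p)) (\<lambda>p. Qmat N k (q1x p)) lam PhiNew"
proof -
  have sol1': "lax_eqs N (\<lambda>p. Qmat N k (q p)) (\<lambda>p. Qmat N k (qx p)) lam1 Phi1"
    and sol': "lax_eqs N (\<lambda>p. Qmat N k (q p)) (\<lambda>p. Qmat N k (qx p)) lam Phi"
    using sol1 sol by (simp_all add: lax_solution_def)
  note Om11_facts = Omega11_real_exact[OF sol1' Om_nonreal Om_real]
  define q1 where "q1 = (\<lambda>p l. q p l + 2 * \<i> * cnj (Phi1 p 0) / Om11 p * Phi1 p l)"
  obtain q1x where "\<forall>l. 1 \<le> l \<and> l \<le> N \<longrightarrow> has_px (\<lambda>p. q1 p l) (\<lambda>p. q1x p l)"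
    and "lax_eqs N (\<lambda>p. Qmat N k (q1 p)) (\<lambda>p. Qmat N k (q1x p)) lam
           (\<lambda>p i. Phi p i - Phi1 p i * (hform N (Phi1 p) (Lam k) (Phi p) / (\<i> * (lam - cnj lam1))) / Om11 p)"
    using darboux_lax_eqs[OF sol1' sol' lam_ne qx Om11_facts(1)[rule_format] Om_nz[rule_format]
        Om11_facts(2)[rule_format] Om11_facts(3,4)]
    unfolding q1_def by blast
  moreover have "\<forall>p i j. i \<le> N \<and> j \<le> N \<longrightarrow> msub (Qmat N k (q p)) (mscale \<i> (comm N sigma3
      (mscale (1 / Om11 p) (mmul N (outer (Phi1 p) (Phi1 p)) (Lam k))))) i j = Qmat N k (q1 p) i j"
    unfolding q1_def using darboux_potential[OF Om11_facts(1)[rule_format]] by blast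
  ultimately show ?thesis
    unfolding Let_def by blast
qed

end
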